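(* Let $\beta>0$, $c\ge0$, $a=\sqrt{\tfrac{\beta}{2}}\sqrt{1+\tfrac{2c}{\beta}-\sqrt{1+\tfrac{4c}{\beta}}}$, $b=\sqrt{\tfrac{\beta}{2}}\sqrt{1+\tfrac{2c}{\beta}+\sqrt{1+\tfrac{4c}{\beta}}}$, $S=[-b,-a]\cup[a,b]$, and let $$f(z)=\frac{2}{\beta z}\sqrt{z-a}\,\sqrt{z-b}\,\sqrt{z+a}\,\sqrt{z+b},$$ each square root being the principal branch (holomorphic on $\mathbb{C}\setminus(-\infty,0]$, positive on $(0,\infty)$). Then the difference of boundary values of $f$, i.e. the distribution $[f]$ on $\mathbb{R}$ given by $([f],\varphi)=\lim_{\varepsilon\to0^+}\int_{\mathbb{R}}\varphi(x)\big(f(x+i\varepsilon)-f(x-i\varepsilon)\big)dx$ for $\varphi\in C_c^\infty(\mathbb{R})$, is $$[f]=2i\pi\,\nu_{\beta,c}+2i\pi\,\frac{2c}{\beta}\,\delta_0,$$ where $\nu_{\beta,c}$ is the probability measure with density $\frac{2}{\pi\beta}\frac{1}{|t|}\sqrt{(t^2-a^2)(b^2-t^2)}$ on $S$ and $0$ off $S$, and $\delta_0$ is the Dirac mass at $0$. *)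

theory Defs
  imports "HOL-Analysis.Analysis"
begin

definition edge_a :: "real \<Rightarrow> real \<Rightarrow> real" where
  "edge_a \<beta> c = sqrt (\<beta>/2) * sqrt (1 + 2*c/\<beta> - sqrt (1 + 4*c/\<beta>))"

definition edge_b :: "real \<Rightarrow> real \<Rightarrow> real" where
  "edge_b \<beta> c = sqrt (\<beta>/2) * sqrt (1 + 2*c/\<beta> + sqrt (1 + 4*c/\<beta>))"

definition supp_S :: "real \<Rightarrow> real \<Rightarrow> real set" where
  "supp_S \<beta> c = {-edge_b \<beta> c..-edge_a \<beta> c} \<union> {edge_a \<beta> c..edge_b \<beta> c}"

definition fbc :: "real \<Rightarrow> real \<Rightarrow> complex \<Rightarrow> complex" where
  "fbc \<beta> c z = (let a = complex_of_real (edge_a \<beta> c); b = complex_of_real (edge_b \<beta> c) in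
     2 / (complex_of_real \<beta> * z) * csqrt (z - a) * csqrt (z - b) * csqrt (z + a) * csqrt (z + b))"

definition nu_density :: "real \<Rightarrow> real \<Rightarrow> real \<Rightarrow> real" where
  "nu_density \<beta> c t = (if t \<in> supp_S \<beta> c then
      2 / (pi * \<beta>) * (1 / \<bar>t\<bar>) * sqrt ((t^2 - (edge_a \<beta> c)^2) * ((edge_b \<beta> c)^2 - t^2))
    else 0)"

definition nu :: "real \<Rightarrow> real \<Rightarrow> real measure" where
  "nu \<beta> c = density lborel (\<lambda>t. ennreal (nu_density \<beta> c t))"

definition smooth_real :: "(real \<Rightarrow> real) \<Rightarrow> bool" where
  "smooth_real \<phi> \<longleftrightarrow> (\<forall>k. ((deriv ^^ k) \<phi>) differentiable_on UNIV)"

definition test_function :: "(real \<Rightarrow> real) \<Rightarrow> bool" where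
  "test_function \<phi> \<longleftrightarrow> smooth_real \<phi> \<and> compact (closure {x. \<phi> x \<noteq> 0})"

end

theory Submission
  imports Defs "HOL-Probability.Sinc_Integral"
begin

text \<open>Off the real axis \<open>f(z) = -(2/\<beta>) \<surd>(a\<^sup>2 - z\<^sup>2) \<surd>(b\<^sup>2 - z\<^sup>2) / z\<close> for the branches of the
  roots with nonnegative real part; since \<open>a b = c\<close>, this is the pole \<open>-2c/(\<beta> z)\<close> plus a term
  bounded by \<open>(2/\<beta>)(a + b + |z|)\<close>. As \<open>f(z\<^sup>*) = f(z)\<^sup>*\<close>, the jump \<open>f(x + i\<epsilon>) - f(x - i\<epsilon>)\<close> is
  \<open>2i Im f(x + i\<epsilon>)\<close>. The pole contributes \<open>2c/\<beta>\<close> times the Poisson kernel \<open>\<epsilon>/(x\<^sup>2 + \<epsilon>\<^sup>2)\<close>,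
  whose integral against \<open>\<phi>\<close> tends to \<open>\<pi> \<phi>(0)\<close>; the bounded term converges for almost every \<open>x\<close>
  to \<open>Im f(x + i0)\<close>, which is \<open>\<pi>\<close> times the density of \<open>\<nu>\<close>, and dominated convergence applies.\<close>

lemma tendsto_Complex_at_right: "((\<lambda>e. Complex x e) \<longlongrightarrow> of_real x) (at_right 0)"
  by (auto simp: Complex_eq intro!: tendsto_eq_intros)

text \<open>On the cut \<open>csqrt\<close> takes the value \<open>i \<surd>|t|\<close>, i.e.\ its limit from the upper half-plane.\<close>
lemma tendsto_csqrt_from_above:
  assumes "t \<noteq> 0"
  shows "((\<lambda>e. csqrt (Complex t e)) \<longlongrightarrow> csqrt (of_real t)) (at_right 0)"
proof -
  have off_cut: "((\<lambda>e. csqrt (Complex s (g e))) \<longlongrightarrow> csqrt (of_real s)) (at_right 0)"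
    if "s > 0" and "(g \<longlongrightarrow> 0) (at_right (0::real))" for s and g :: "real \<Rightarrow> real"
  proof -
    have "isCont csqrt (of_real s)"
      using \<open>s > 0\<close> by (intro continuous_at_csqrt) (auto simp: complex_nonpos_Reals_iff)
    moreover have "((\<lambda>e. Complex s (g e)) \<longlongrightarrow> of_real s) (at_right 0)"
      using that(2) by (auto simp: Complex_eq intro!: tendsto_eq_intros)
    ultimately show ?thesis
      by (rule isCont_tendsto_compose)
  qed
  show ?thesis
  proof (cases "t > 0")
    case True
    then show ?thesis using off_cut[of t "\<lambda>e. e"] by simp
  next
    case False
    then have "-t > 0" using assms by simp
    have "((\<lambda>e. \<i> * csqrt (Complex (-t) (-e))) \<longlongrightarrow> \<i> * csqrt (of_real (-t))) (at_right 0)"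
    proof (intro tendsto_mult tendsto_const off_cut)
      show "((\<lambda>e. - e) \<longlongrightarrow> 0) (at_right (0::real))"
        by (auto intro!: tendsto_eq_intros)
    qed (use \<open>-t > 0\<close> in simp)
    moreover have "\<forall>\<^sub>F e in at_right 0. \<i> * csqrt (Complex (-t) (-e)) = csqrt (Complex t e)"
      using eventually_at_right_less[of 0]
    proof eventually_elim
      case (elim e)
      have "Complex t e = - Complex (-t) (-e)" by (simp add: complex_eq_iff)
      then show ?case using elim by (simp del: csqrt.simps)
    qed
    moreover have "\<i> * csqrt (of_real (-t)) = csqrt (of_real t)"
      using \<open>-t > 0\<close> by (simp add: csqrt_of_real')
    ultimately show ?thesis
      using tendsto_cong[of "\<lambda>e. \<i> * csqrt (Complex (-t) (-e))" "\<lambda>e. csqrt (Complex t e)"] by simp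
  qed
qed

lemma csqrt_diff_mult_csqrt_diff:
  assumes "Im z \<noteq> 0"
  shows "csqrt (z - of_real a) * csqrt (z - of_real b) = - (csqrt (of_real a - z) * csqrt (of_real b - z))"
proof (cases "Im z > 0")
  case True
  then have "csqrt (z - of_real t) = \<i> * csqrt (of_real t - z)" for t
    using csqrt_minus[of "of_real t - z"] by simp
  then show ?thesis by (simp add: algebra_simps)
next
  case False
  then have "csqrt (of_real t - z) = \<i> * csqrt (z - of_real t)" for t
    using csqrt_minus[of "z - of_real t"] assms by simp
  then show ?thesis by (simp add: algebra_simps)
qed

lemma borel_measurable_csqrt[measurable]: "csqrt \<in> borel_measurable borel"
proof -
  have "csqrt = (\<lambda>z. of_real (sqrt ((cmod z + Re z) / 2)) +
      \<i> * of_real ((if Im z = 0 then 1 else sgn (Im z)) * sqrt ((cmod z - Re z) / 2)))"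
    by (rule ext) (simp add: complex_eq_iff)
  also have "\<dots> \<in> borel_measurable borel"
    by measurable
  finally show ?thesis .
qed

definition root_sq_diff :: "real \<Rightarrow> complex \<Rightarrow> complex" where
  "root_sq_diff a z = csqrt (of_real a - z) * csqrt (z + of_real a)"

lemma root_sq_diff_squared: "(root_sq_diff a z)^2 = (of_real a)^2 - z^2"
  unfolding root_sq_diff_def power_mult_distrib power2_csqrt by (simp add: algebra_simps power2_eq_square)

lemma Re_root_sq_diff_nonneg:
  assumes "Im z \<noteq> 0"
  shows "0 \<le> Re (root_sq_diff a z)"
proof -
  define u where "u = csqrt (of_real a - z)"
  define v where "v = csqrt (z + of_real a)"
  have "Im u * Im v \<le> 0"
  proof -
    have "Im u = sgn (- Im z) * sqrt ((cmod (of_real a - z) - Re (of_real a - z)) / 2)"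
      "Im v = sgn (Im z) * sqrt ((cmod (z + of_real a) - Re (z + of_real a)) / 2)"
      using assms unfolding u_def v_def by simp_all
    moreover have "0 \<le> sqrt ((cmod (of_real a - z) - Re (of_real a - z)) / 2)"
      "0 \<le> sqrt ((cmod (z + of_real a) - Re (z + of_real a)) / 2)"
      using complex_Re_le_cmod[of "of_real a - z"] complex_Re_le_cmod[of "z + of_real a"] by simp_all
    ultimately show ?thesis
      using assms by (cases "Im z > 0") (auto simp: mult_le_0_iff)
  qed
  moreover have "0 \<le> Re u" "0 \<le> Re v"
    unfolding u_def v_def by (rule Re_csqrt)+
  ultimately have "Im u * Im v \<le> Re u * Re v"
    by (meson mult_nonneg_nonneg order_trans)
  then show ?thesis
    unfolding root_sq_diff_def u_def[symmetric] v_def[symmetric] by simp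
qed

text \<open>Since the root has nonnegative real part it is at least as close to \<open>a\<close> as to \<open>-a\<close>,
  and the product of the two distances is \<open>|z|\<^sup>2\<close>.\<close>
lemma norm_root_sq_diff_minus_le:
  assumes "0 \<le> a" "Im z \<noteq> 0"
  shows "cmod (root_sq_diff a z - of_real a) \<le> cmod z"
proof -
  define q where "q = root_sq_diff a z"
  have "0 \<le> Re q" unfolding q_def using Re_root_sq_diff_nonneg[OF assms(2)] .
  then have "(cmod (q - of_real a))^2 \<le> (cmod (q + of_real a))^2"
    using assms(1) unfolding cmod_power2 by (simp add: power2_eq_square algebra_simps)
  then have closer: "cmod (q - of_real a) \<le> cmod (q + of_real a)"
    by (simp add: power2_le_iff_abs_le)
  have "cmod (q - of_real a) * cmod (q + of_real a) = cmod (q^2 - (of_real a)^2)"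
    by (simp add: power2_eq_square norm_mult[symmetric] algebra_simps)
  also have "\<dots> = (cmod z)^2"
    unfolding q_def root_sq_diff_squared by (simp add: norm_power)
  finally have "(cmod (q - of_real a))^2 \<le> (cmod z)^2"
    using mult_left_mono[OF closer, of "cmod (q - of_real a)"] by (simp add: power2_eq_square)
  then show ?thesis
    unfolding q_def by (simp add: power2_le_iff_abs_le)
qed

lemma norm_root_sq_diff_le:
  assumes "0 \<le> b"
  shows "cmod (root_sq_diff b z) \<le> b + cmod z"
proof -
  have "cmod (root_sq_diff b z) = sqrt (cmod (of_real b - z)) * sqrt (cmod (z + of_real b))"
    by (simp add: root_sq_diff_def norm_mult)
  also have "\<dots> \<le> (cmod (of_real b - z) + cmod (z + of_real b)) / 2"
    using arith_geo_mean_sqrt[of "cmod (of_real b - z)" "cmod (z + of_real b)"] by (simp add: real_sqrt_mult)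
  also have "\<dots> \<le> b + cmod z"
    using norm_triangle_ineq4[of "of_real b" z] norm_triangle_ineq[of z "of_real b"] assms by simp
  finally show ?thesis .
qed

lemma norm_root_sq_diff_mult_minus_le:
  assumes "0 \<le> a" "0 \<le> b" "Im z \<noteq> 0"
  shows "cmod (root_sq_diff a z * root_sq_diff b z - of_real (a * b)) \<le> cmod z * (a + b + cmod z)"
proof -
  have "root_sq_diff a z * root_sq_diff b z - of_real (a * b) =
      (root_sq_diff a z - of_real a) * root_sq_diff b z + of_real a * (root_sq_diff b z - of_real b)"
    by (simp add: algebra_simps)
  then have "cmod (root_sq_diff a z * root_sq_diff b z - of_real (a * b)) \<le>
      cmod (root_sq_diff a z - of_real a) * cmod (root_sq_diff b z) + a * cmod (root_sq_diff b z - of_real b)"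
    using norm_triangle_ineq[of "(root_sq_diff a z - of_real a) * root_sq_diff b z"
        "of_real a * (root_sq_diff b z - of_real b)"] assms(1)
    by (simp add: norm_mult)
  also have "\<dots> \<le> cmod z * (b + cmod z) + a * cmod z"
    using norm_root_sq_diff_minus_le[OF assms(1,3)] norm_root_sq_diff_minus_le[OF assms(2,3)]
      norm_root_sq_diff_le[OF assms(2)] assms(1)
    by (intro add_mono mult_mono mult_left_mono) auto
  finally show ?thesis by (simp add: algebra_simps)
qed

lemma edges_of_support:
  assumes "\<beta> > 0" "c \<ge> 0"
  shows edge_a_nonneg: "0 \<le> edge_a \<beta> c"
    and edge_a_le_edge_b: "edge_a \<beta> c \<le> edge_b \<beta> c"
    and edge_a_mult_edge_b: "edge_a \<beta> c * edge_b \<beta> c = c"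
proof -
  define s where "s = sqrt (1 + 4*c/\<beta>)"
  define X where "X = 1 + 2*c/\<beta>"
  have "s \<ge> 0" unfolding s_def using assms by simp
  have diff_squares: "(X - s) * (X + s) = (2*c/\<beta>)^2"
    unfolding X_def s_def using assms by (simp add: power2_eq_square field_simps)
  have "s^2 \<le> X^2"
    using diff_squares by (simp add: power2_eq_square algebra_simps)
  then have "s \<le> X"
    using power2_le_imp_le[of s X] X_def assms by simp
  have a: "edge_a \<beta> c = sqrt (\<beta>/2) * sqrt (X - s)" and b: "edge_b \<beta> c = sqrt (\<beta>/2) * sqrt (X + s)"
    unfolding edge_a_def edge_b_def X_def s_def by simp_all
  show "0 \<le> edge_a \<beta> c" unfolding a using \<open>s \<le> X\<close> assms by simp
  show "edge_a \<beta> c \<le> edge_b \<beta> c" unfolding a b using \<open>s \<ge> 0\<close> assms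
    by (intro mult_left_mono) auto
  have "edge_a \<beta> c * edge_b \<beta> c = (sqrt (\<beta>/2))^2 * sqrt ((X - s) * (X + s))"
    unfolding a b real_sqrt_mult power2_eq_square by (simp add: algebra_simps)
  also have "\<dots> = c"
    unfolding diff_squares using assms by simp
  finally show "edge_a \<beta> c * edge_b \<beta> c = c" .
qed

lemma borel_measurable_nu_density[measurable]: "nu_density \<beta> c \<in> borel_measurable borel"
proof -
  have "supp_S \<beta> c \<in> sets borel"
    unfolding supp_S_def by (intro borel_closed closed_Un closed_real_atLeastAtMost)
  then show ?thesis
    unfolding nu_density_def by measurable
qed

lemma nu_density_nonneg:
  assumes "\<beta> > 0" "c \<ge> 0"
  shows "0 \<le> nu_density \<beta> c x"
proof (cases "x \<in> supp_S \<beta> c")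
  case True
  then have "edge_a \<beta> c \<le> \<bar>x\<bar>" "\<bar>x\<bar> \<le> edge_b \<beta> c"
    using edge_a_nonneg[OF assms] unfolding supp_S_def by auto
  then have "(edge_a \<beta> c)^2 \<le> x^2" "x^2 \<le> (edge_b \<beta> c)^2"
    using edge_a_nonneg[OF assms] by (metis abs_le_square_iff abs_of_nonneg order.trans)+
  then show ?thesis
    using True assms by (simp add: nu_density_def)
qed (simp add: nu_density_def)

lemma borel_measurable_fbc[measurable]: "fbc \<beta> c \<in> borel_measurable borel"
  unfolding fbc_def Let_def by measurable

lemma fbc_cnj:
  assumes "Im z \<noteq> 0"
  shows "fbc \<beta> c (cnj z) = cnj (fbc \<beta> c z)"
proof -
  have "cnj (csqrt (z + of_real t)) = csqrt (cnj z + of_real t)" for t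
    using assms cnj_csqrt[of "z + of_real t"] by (simp add: complex_nonpos_Reals_iff)
  moreover have "cnj (csqrt (z - of_real t)) = csqrt (cnj z - of_real t)" for t
    using assms cnj_csqrt[of "z - of_real t"] by (simp add: complex_nonpos_Reals_iff)
  ultimately show ?thesis
    by (simp add: fbc_def Let_def)
qed

lemma fbc_jump:
  assumes "e \<noteq> 0"
  shows "fbc \<beta> c (Complex x e) - fbc \<beta> c (Complex x (-e)) = 2 * \<i> * of_real (Im (fbc \<beta> c (Complex x e)))"
  using fbc_cnj[of "Complex x e"] assms by (simp add: complex_cnj complex_diff_cnj)

lemma fbc_eq_root_sq_diff:
  assumes "Im z \<noteq> 0"
  shows "fbc \<beta> c z = - (2 / of_real \<beta>) * root_sq_diff (edge_a \<beta> c) z * root_sq_diff (edge_b \<beta> c) z / z"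
proof -
  have "fbc \<beta> c z = 2 / (of_real \<beta> * z) *
      (csqrt (z - of_real (edge_a \<beta> c)) * csqrt (z - of_real (edge_b \<beta> c))) *
      csqrt (z + of_real (edge_a \<beta> c)) * csqrt (z + of_real (edge_b \<beta> c))"
    by (simp add: fbc_def Let_def mult.assoc)
  then show ?thesis
    unfolding csqrt_diff_mult_csqrt_diff[OF assms] by (simp add: root_sq_diff_def field_simps)
qed

lemma tendsto_fbc_from_above:
  assumes "x \<notin> {0, edge_a \<beta> c, - edge_a \<beta> c, edge_b \<beta> c, - edge_b \<beta> c}"
  shows "((\<lambda>e. fbc \<beta> c (Complex x e)) \<longlongrightarrow> fbc \<beta> c (of_real x)) (at_right 0)"
proof -
  have shift: "Complex x e + of_real t = Complex (x + t) e" "Complex x e - of_real t = Complex (x - t) e"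
    for e t by (simp_all add: complex_eq_iff)
  show ?thesis
    unfolding fbc_def Let_def shift divide_divide_eq_left[symmetric]
      of_real_add[symmetric] of_real_diff[symmetric] using assms
    by (intro tendsto_mult tendsto_divide tendsto_const tendsto_csqrt_from_above tendsto_Complex_at_right) auto
qed

lemma Im_fbc_of_real:
  assumes "\<beta> > 0" "c \<ge> 0"
  shows "Im (fbc \<beta> c (of_real x)) = pi * nu_density \<beta> c x"
proof -
  define a where "a = edge_a \<beta> c"
  define b where "b = edge_b \<beta> c"
  have "0 \<le> a" "a \<le> b"
    unfolding a_def b_def using edge_a_nonneg edge_a_le_edge_b assms by auto
  have fbc_real: "fbc \<beta> c (of_real x) = 2 / (of_real \<beta> * of_real x) *
      csqrt (of_real (x - a)) * csqrt (of_real (x - b)) * csqrt (of_real (x + a)) * csqrt (of_real (x + b))"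
    by (simp add: fbc_def Let_def a_def b_def)
  have nu_density: "pi * nu_density \<beta> c x = (if a \<le> \<bar>x\<bar> \<and> \<bar>x\<bar> \<le> b then
      2 / (\<beta> * \<bar>x\<bar>) * sqrt ((x^2 - a^2) * (b^2 - x^2)) else 0)"
    using \<open>0 \<le> a\<close> assms(1) by (auto simp: nu_density_def supp_S_def a_def[symmetric] b_def[symmetric])
  txt \<open>For \<open>a < x < b\<close> one of the four radicands is negative, for \<open>-b < x < -a\<close> three are;
    elsewhere an even number is negative or one vanishes, and the value is real.\<close>
  consider "x \<in> {0, a, -a, b, -b}" | "b < x" | "a < x" "x < b" | "0 < x" "x < a"
    | "-a < x" "x < 0" | "-b < x" "x < -a" | "x < -b"
    by fastforce
  then show ?thesis
  proof cases
    case 3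
    have "sqrt (x - a) * (sqrt (b - x) * (sqrt (x + a) * sqrt (x + b))) = sqrt ((x^2 - a^2) * (b^2 - x^2))"
      by (simp add: real_sqrt_mult[symmetric] power2_eq_square algebra_simps)
    with 3 \<open>0 \<le> a\<close> show ?thesis
      unfolding fbc_real nu_density by (simp add: csqrt_of_real' del: csqrt.simps of_real_diff of_real_add)
  next
    case 6
    have "sqrt (a - x) * (sqrt (b - x) * (sqrt (- x - a) * sqrt (x + b))) = sqrt ((x^2 - a^2) * (b^2 - x^2))"
      by (simp add: real_sqrt_mult[symmetric] power2_eq_square algebra_simps)
    with 6 \<open>0 \<le> a\<close> show ?thesis
      unfolding fbc_real nu_density by (simp add: csqrt_of_real' del: csqrt.simps of_real_diff of_real_add)
  qed (use \<open>0 \<le> a\<close> \<open>a \<le> b\<close> in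
        \<open>auto simp: fbc_real nu_density csqrt_of_real' simp del: csqrt.simps of_real_diff of_real_add\<close>)
qed

definition fbc_regular :: "real \<Rightarrow> real \<Rightarrow> complex \<Rightarrow> complex" where
  "fbc_regular \<beta> c z = fbc \<beta> c z + of_real (2 * c / \<beta>) / z"

lemma borel_measurable_fbc_regular[measurable]: "fbc_regular \<beta> c \<in> borel_measurable borel"
  unfolding fbc_regular_def by measurable

text \<open>Since \<open>a b = c\<close>, the pole part cancels the constant term of \<open>\<surd>(a\<^sup>2 - z\<^sup>2) \<surd>(b\<^sup>2 - z\<^sup>2)\<close>,
  and what remains is \<open>O(|z|)\<close>.\<close>
lemma norm_fbc_regular_le:
  assumes "\<beta> > 0" "c \<ge> 0" "Im z \<noteq> 0"
  shows "cmod (fbc_regular \<beta> c z) \<le> 2 / \<beta> * (edge_a \<beta> c + edge_b \<beta> c + cmod z)"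
proof -
  define a where "a = edge_a \<beta> c"
  define b where "b = edge_b \<beta> c"
  have "0 \<le> a" "a \<le> b" "a * b = c"
    unfolding a_def b_def using edge_a_nonneg edge_a_le_edge_b edge_a_mult_edge_b assms by auto
  have "z \<noteq> 0" using assms by auto
  have split: "fbc_regular \<beta> c z =
      - (2 / of_real \<beta>) * ((root_sq_diff a z * root_sq_diff b z - of_real (a * b)) / z)"
    unfolding fbc_regular_def fbc_eq_root_sq_diff[OF assms(3)] a_def[symmetric] b_def[symmetric] \<open>a * b = c\<close>
    using \<open>z \<noteq> 0\<close> assms(1) by (simp add: field_simps)
  have "cmod (fbc_regular \<beta> c z) =
      2 / \<beta> * (cmod (root_sq_diff a z * root_sq_diff b z - of_real (a * b)) / cmod z)"
    unfolding split norm_mult norm_minus_cancel norm_divide using assms(1) by simp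
  also have "\<dots> \<le> 2 / \<beta> * (a + b + cmod z)"
    using norm_root_sq_diff_mult_minus_le[OF \<open>0 \<le> a\<close> _ assms(3), of b] \<open>0 \<le> a\<close> \<open>a \<le> b\<close> \<open>z \<noteq> 0\<close> assms(1)
    by (intro mult_left_mono) (simp_all add: divide_le_eq mult.commute)
  finally show ?thesis unfolding a_def b_def .
qed

lemma Im_fbc_regular_of_real:
  assumes "\<beta> > 0" "c \<ge> 0"
  shows "Im (fbc_regular \<beta> c (of_real x)) = pi * nu_density \<beta> c x"
  using Im_fbc_of_real[OF assms] by (simp add: fbc_regular_def flip: of_real_divide)

lemma tendsto_fbc_regular_from_above:
  assumes "x \<notin> {0, edge_a \<beta> c, - edge_a \<beta> c, edge_b \<beta> c, - edge_b \<beta> c}"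
  shows "((\<lambda>e. fbc_regular \<beta> c (Complex x e)) \<longlongrightarrow> fbc_regular \<beta> c (of_real x)) (at_right 0)"
  unfolding fbc_regular_def using assms
  by (intro tendsto_add tendsto_fbc_from_above tendsto_divide tendsto_const tendsto_Complex_at_right) auto

lemma integral_dominated_convergence_at_right:
  fixes s :: "real \<Rightarrow> 'a \<Rightarrow> 'b::{banach, second_countable_topology}" and w :: "'a \<Rightarrow> real"
  assumes "f \<in> borel_measurable M" "\<And>e. s e \<in> borel_measurable M" "integrable M w"
    and "AE x in M. ((\<lambda>e. s e x) \<longlongrightarrow> f x) (at_right 0)"
    and "\<forall>\<^sub>F e in at_right 0. AE x in M. norm (s e x) \<le> w x"
  shows "((\<lambda>e. integral\<^sup>L M (s e)) \<longlongrightarrow> integral\<^sup>L M f) (at_right 0)"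
  unfolding filterlim_at_right_to_top
proof (rule integral_dominated_convergence_at_top[where w = w])
  show "AE x in M. ((\<lambda>t. s (inverse t) x) \<longlongrightarrow> f x) at_top"
    using assms(4) by eventually_elim (simp add: filterlim_at_right_to_top)
  show "\<forall>\<^sub>F t in at_top. AE x in M. norm (s (inverse t) x) \<le> w x"
    using assms(5) by (simp add: eventually_at_right_to_top)
qed (use assms(1-3) in auto)

lemma integral_inverse_1_plus_square:
  "integrable lborel (\<lambda>t::real. inverse (1 + t^2))"
  "integral\<^sup>L lborel (\<lambda>t::real. inverse (1 + t^2)) = pi"
proof -
  have UNIV: "einterval (-\<infinity>) \<infinity> = (UNIV :: real set)" by (auto simp: einterval_iff)
  show "integrable lborel (\<lambda>t::real. inverse (1 + t^2))"
    using integrable_inverse_1_plus_square unfolding UNIV set_integrable_def by simp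
  show "integral\<^sup>L lborel (\<lambda>t::real. inverse (1 + t^2)) = pi"
    using LBINT_inverse_1_plus_square
    unfolding interval_lebesgue_integral_def UNIV set_lebesgue_integral_def by simp
qed

lemma tendsto_integral_poisson_kernel:
  fixes \<phi> :: "real \<Rightarrow> real"
  assumes cont: "continuous_on UNIV \<phi>" and bounded: "\<And>x. \<bar>\<phi> x\<bar> \<le> M"
  shows "((\<lambda>e. integral\<^sup>L lborel (\<lambda>x. \<phi> x * (e / (x^2 + e^2)))) \<longlongrightarrow> pi * \<phi> 0) (at_right 0)"
proof -
  have [measurable]: "\<phi> \<in> borel_measurable borel"
    using cont by (rule borel_measurable_continuous_onI)
  have rescale: "integral\<^sup>L lborel (\<lambda>x. \<phi> x * (e / (x^2 + e^2)))
      = integral\<^sup>L lborel (\<lambda>t. \<phi> (e * t) * inverse (1 + t^2))" if "e > 0" for e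
  proof -
    have kernel: "e * (e / ((e * t)^2 + e^2)) = inverse (1 + t^2)" for t
    proof -
      have "(e * t)^2 + e^2 = e^2 * (1 + t^2)"
        by (simp add: algebra_simps power_mult_distrib)
      then show ?thesis
        using that by (simp add: power2_eq_square inverse_eq_divide)
    qed
    have "integral\<^sup>L lborel (\<lambda>x. \<phi> x * (e / (x^2 + e^2)))
        = e * integral\<^sup>L lborel (\<lambda>t. \<phi> (e * t) * (e / ((e * t)^2 + e^2)))"
      using that lborel_integral_real_affine[of e "\<lambda>x. \<phi> x * (e / (x^2 + e^2))" 0] by simp
    also have "\<dots> = integral\<^sup>L lborel (\<lambda>t. \<phi> (e * t) * (e * (e / ((e * t)^2 + e^2))))"
      by (simp flip: integral_mult_right_zero add: ac_simps)
    finally show ?thesis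
      unfolding kernel .
  qed
  have "((\<lambda>e. integral\<^sup>L lborel (\<lambda>t. \<phi> (e * t) * inverse (1 + t^2))) \<longlongrightarrow>
      integral\<^sup>L lborel (\<lambda>t. \<phi> 0 * inverse (1 + t^2))) (at_right 0)"
  proof (rule integral_dominated_convergence_at_right[where w = "\<lambda>t. M * inverse (1 + t^2)"])
    show "integrable lborel (\<lambda>t. M * inverse (1 + t^2))"
      using integral_inverse_1_plus_square(1) by simp
    show "AE t in lborel. ((\<lambda>e. \<phi> (e * t) * inverse (1 + t^2)) \<longlongrightarrow> \<phi> 0 * inverse (1 + t^2)) (at_right 0)"
    proof (intro AE_I2 tendsto_mult tendsto_const)
      fix t :: real
      have "((\<lambda>e. e * t) \<longlongrightarrow> 0) (at_right 0)"
        by (auto intro!: tendsto_eq_intros)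
      then show "((\<lambda>e. \<phi> (e * t)) \<longlongrightarrow> \<phi> 0) (at_right 0)"
        using cont continuous_on_tendsto_compose[of UNIV \<phi> "\<lambda>e. e * t"] by auto
    qed
    show "\<forall>\<^sub>F e in at_right 0. AE t in lborel. norm (\<phi> (e * t) * inverse (1 + t^2)) \<le> M * inverse (1 + t^2)"
      using bounded by (intro always_eventually allI AE_I2) (simp add: abs_mult mult_right_mono)
  qed simp_all
  then have "((\<lambda>e. integral\<^sup>L lborel (\<lambda>t. \<phi> (e * t) * inverse (1 + t^2))) \<longlongrightarrow> pi * \<phi> 0) (at_right 0)"
    using integral_inverse_1_plus_square(2) by (simp add: mult.commute)
  moreover have "\<forall>\<^sub>F e in at_right 0. integral\<^sup>L lborel (\<lambda>t. \<phi> (e * t) * inverse (1 + t^2))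
      = integral\<^sup>L lborel (\<lambda>x. \<phi> x * (e / (x^2 + e^2)))"
    using eventually_at_right_less[of 0] by eventually_elim (rule rescale[symmetric])
  ultimately show ?thesis
    by (rule tendsto_cong[THEN iffD1, rotated])
qed

lemma integrable_mult_poisson_kernel:
  fixes \<phi> :: "real \<Rightarrow> real"
  assumes "e > 0" and [measurable]: "\<phi> \<in> borel_measurable borel"
    and bounded: "\<And>x. \<bar>\<phi> x\<bar> \<le> M" and support: "\<And>x. R < \<bar>x\<bar> \<Longrightarrow> \<phi> x = 0"
  shows "integrable lborel (\<lambda>x. \<phi> x * (e / (x^2 + e^2)))"
proof (rule Bochner_Integration.integrable_bound)
  show "integrable lborel (\<lambda>x. M / e * indicator {-R..R} x :: real)"
    by (intro integrable_mult_right integrable_real_indicator) (auto simp: emeasure_lborel_Icc_eq)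
  have "\<bar>\<phi> x * (e / (x^2 + e^2))\<bar> \<le> M / e * indicator {-R..R} x" for x
  proof (cases "R < \<bar>x\<bar>")
    case False
    have "e / (x^2 + e^2) \<le> 1 / e"
      using \<open>e > 0\<close> by (simp add: divide_simps power2_eq_square add_nonneg_pos)
    then have "\<bar>\<phi> x\<bar> * (e / (x^2 + e^2)) \<le> M * (1 / e)"
      using bounded[of x] \<open>e > 0\<close> by (intro mult_mono) auto
    moreover have "indicator {-R..R} x = (1::real)"
      using False by (simp add: indicator_def abs_less_iff not_less) linarith
    ultimately show ?thesis
      using \<open>e > 0\<close> by (simp add: abs_mult)
  qed (auto simp: support indicator_def)
  then show "AE x in lborel. norm (\<phi> x * (e / (x^2 + e^2))) \<le> norm (M / e * indicator {-R..R} x :: real)"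
    unfolding real_norm_def by (intro AE_I2 order_trans[OF _ abs_ge_self])
qed simp

lemma test_function_imp_continuous:
  assumes "test_function \<phi>"
  shows "continuous_on UNIV \<phi>"
proof -
  have "((deriv ^^ 0) \<phi>) differentiable_on UNIV"
    using assms unfolding test_function_def smooth_real_def by blast
  then show ?thesis by (simp add: differentiable_imp_continuous_on)
qed

lemma test_function_imp_bounded_support:
  assumes "test_function \<phi>"
  obtains R where "\<And>x. R < \<bar>x\<bar> \<Longrightarrow> \<phi> x = 0"
proof -
  have "bounded (closure {x. \<phi> x \<noteq> 0})"
    using assms by (simp add: test_function_def compact_imp_bounded)
  then obtain B where "\<And>x. x \<in> closure {x. \<phi> x \<noteq> 0} \<Longrightarrow> \<bar>x\<bar> \<le> B"
    by (auto simp: bounded_iff)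
  then have "\<phi> x = 0" if "B < \<bar>x\<bar>" for x
    using that closure_subset by force
  then show ?thesis by (rule that)
qed

lemma continuous_bounded_support_imp_bounded:
  fixes \<phi> :: "real \<Rightarrow> real"
  assumes "continuous_on UNIV \<phi>" "\<And>x. R < \<bar>x\<bar> \<Longrightarrow> \<phi> x = 0"
  obtains M where "\<And>x. \<bar>\<phi> x\<bar> \<le> M"
proof -
  have "compact (\<phi> ` {-R..R})"
    by (rule compact_continuous_image) (auto intro: continuous_on_subset[OF assms(1)])
  then obtain M where M: "\<And>y. y \<in> \<phi> ` {-R..R} \<Longrightarrow> \<bar>y\<bar> \<le> M"
    using compact_imp_bounded bounded_iff real_norm_def by metis
  have "\<bar>\<phi> x\<bar> \<le> max M 0" for x
    using M[of "\<phi> x"] assms(2)[of x] by (cases "R < \<bar>x\<bar>") force+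
  then show ?thesis by (rule that)
qed

lemma abs_mult_Im_fbc_regular_le:
  fixes \<phi> :: "real \<Rightarrow> real"
  assumes "\<beta> > 0" "c \<ge> 0" "e \<noteq> 0"
    and bounded: "\<And>x. \<bar>\<phi> x\<bar> \<le> M" and support: "\<And>x. R < \<bar>x\<bar> \<Longrightarrow> \<phi> x = 0"
  shows "\<bar>\<phi> x * Im (fbc_regular \<beta> c (Complex x e))\<bar> \<le>
    M * (2 / \<beta> * (edge_a \<beta> c + edge_b \<beta> c + R + \<bar>e\<bar>)) * indicator {-R..R} x"
proof (cases "R < \<bar>x\<bar>")
  case False
  have "\<bar>Im (fbc_regular \<beta> c (Complex x e))\<bar> \<le> cmod (fbc_regular \<beta> c (Complex x e))"
    by (rule abs_Im_le_cmod)
  also have "\<dots> \<le> 2 / \<beta> * (edge_a \<beta> c + edge_b \<beta> c + cmod (Complex x e))"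
    using assms(1-3) by (intro norm_fbc_regular_le) auto
  also have "\<dots> \<le> 2 / \<beta> * (edge_a \<beta> c + edge_b \<beta> c + R + \<bar>e\<bar>)"
    using cmod_le[of "Complex x e"] False assms(1) by (intro mult_left_mono) auto
  finally have "\<bar>\<phi> x\<bar> * \<bar>Im (fbc_regular \<beta> c (Complex x e))\<bar> \<le>
      M * (2 / \<beta> * (edge_a \<beta> c + edge_b \<beta> c + R + \<bar>e\<bar>))"
    using bounded[of x] abs_ge_zero[of "\<phi> x"] by (intro mult_mono) auto
  moreover have "indicator {-R..R} x = (1::real)"
    using False by (simp add: indicator_def abs_less_iff not_less) linarith
  ultimately show ?thesis
    by (simp add: abs_mult)
qed (auto simp: support indicator_def)

lemma integrable_mult_Im_fbc_regular:
  fixes \<phi> :: "real \<Rightarrow> real"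
  assumes "\<beta> > 0" "c \<ge> 0" "e \<noteq> 0" and [measurable]: "\<phi> \<in> borel_measurable borel"
    and "\<And>x. \<bar>\<phi> x\<bar> \<le> M" "\<And>x. R < \<bar>x\<bar> \<Longrightarrow> \<phi> x = 0"
  shows "integrable lborel (\<lambda>x. \<phi> x * Im (fbc_regular \<beta> c (Complex x e)))"
proof (rule Bochner_Integration.integrable_bound)
  show "integrable lborel (\<lambda>x. M * (2 / \<beta> * (edge_a \<beta> c + edge_b \<beta> c + R + \<bar>e\<bar>)) * indicator {-R..R} x)"
    by (intro integrable_mult_right integrable_real_indicator) (auto simp: emeasure_lborel_Icc_eq)
  show "AE x in lborel. norm (\<phi> x * Im (fbc_regular \<beta> c (Complex x e))) \<le>
      norm (M * (2 / \<beta> * (edge_a \<beta> c + edge_b \<beta> c + R + \<bar>e\<bar>)) * indicator {-R..R} x)"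
  proof (intro AE_I2)
    fix x
    have "\<bar>\<phi> x * Im (fbc_regular \<beta> c (Complex x e))\<bar> \<le>
        M * (2 / \<beta> * (edge_a \<beta> c + edge_b \<beta> c + R + \<bar>e\<bar>)) * indicator {-R..R} x"
      by (rule abs_mult_Im_fbc_regular_le) (use assms in auto)
    then show "norm (\<phi> x * Im (fbc_regular \<beta> c (Complex x e))) \<le>
        norm (M * (2 / \<beta> * (edge_a \<beta> c + edge_b \<beta> c + R + \<bar>e\<bar>)) * indicator {-R..R} x)"
      unfolding real_norm_def by (rule order_trans[OF _ abs_ge_self])
  qed
qed (simp add: Complex_eq)

lemma tendsto_integral_Im_fbc_regular:
  fixes \<phi> :: "real \<Rightarrow> real"
  assumes "\<beta> > 0" "c \<ge> 0" and [measurable]: "\<phi> \<in> borel_measurable borel"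
    and "\<And>x. \<bar>\<phi> x\<bar> \<le> M" "\<And>x. R < \<bar>x\<bar> \<Longrightarrow> \<phi> x = 0"
  shows "((\<lambda>e. integral\<^sup>L lborel (\<lambda>x. \<phi> x * Im (fbc_regular \<beta> c (Complex x e))))
    \<longlongrightarrow> integral\<^sup>L lborel (\<lambda>x. \<phi> x * (pi * nu_density \<beta> c x))) (at_right 0)"
proof (rule integral_dominated_convergence_at_right)
  let ?w = "\<lambda>x. M * (2 / \<beta> * (edge_a \<beta> c + edge_b \<beta> c + R + 1)) * indicator {-R..R} x"
  show "integrable lborel ?w"
    by (intro integrable_mult_right integrable_real_indicator) (auto simp: emeasure_lborel_Icc_eq)
  show "AE x in lborel. ((\<lambda>e. \<phi> x * Im (fbc_regular \<beta> c (Complex x e))) \<longlongrightarrow> \<phi> x * (pi * nu_density \<beta> c x))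
      (at_right 0)"
  proof -
    have "AE x in lborel. x \<notin> {0, edge_a \<beta> c, - edge_a \<beta> c, edge_b \<beta> c, - edge_b \<beta> c}"
      by (intro AE_not_in countable_imp_null_set_lborel) auto
    then show ?thesis
    proof eventually_elim
      case (elim x)
      show ?case
        unfolding Im_fbc_regular_of_real[OF assms(1,2), symmetric]
        by (intro tendsto_mult tendsto_const tendsto_Im tendsto_fbc_regular_from_above elim)
    qed
  qed
  show "\<forall>\<^sub>F e in at_right 0. AE x in lborel. norm (\<phi> x * Im (fbc_regular \<beta> c (Complex x e))) \<le> ?w x"
  proof -
    have "\<forall>\<^sub>F e in at_right (0::real). 0 < e \<and> e < 1"
      unfolding eventually_at_right_field by (auto intro!: exI[of _ 1])
    then show ?thesis
    proof eventually_elim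
      case (elim e)
      have "0 \<le> M" using assms(4)[of 0] by linarith
      then have "M * (2 / \<beta> * (edge_a \<beta> c + edge_b \<beta> c + R + \<bar>e\<bar>)) * indicator {-R..R} x \<le> ?w x" for x
        using elim assms(1) by (intro mult_right_mono mult_left_mono) auto
      moreover have "\<bar>\<phi> x * Im (fbc_regular \<beta> c (Complex x e))\<bar> \<le>
          M * (2 / \<beta> * (edge_a \<beta> c + edge_b \<beta> c + R + \<bar>e\<bar>)) * indicator {-R..R} x" for x
        by (rule abs_mult_Im_fbc_regular_le) (use assms elim in auto)
      ultimately show ?case
        by (intro AE_I2) (auto intro: order_trans)
    qed
  qed
qed (simp_all add: Complex_eq)

lemma tendsto_integral_Im_fbc_from_above:
  fixes \<phi> :: "real \<Rightarrow> real"
  assumes "\<beta> > 0" "c \<ge> 0" and cont: "continuous_on UNIV \<phi>"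
    and support: "\<And>x. R < \<bar>x\<bar> \<Longrightarrow> \<phi> x = 0"
  shows "((\<lambda>e. integral\<^sup>L lborel (\<lambda>x. \<phi> x * Im (fbc \<beta> c (Complex x e))))
    \<longlongrightarrow> pi * integral\<^sup>L (nu \<beta> c) \<phi> + pi * (2 * c / \<beta>) * \<phi> 0) (at_right 0)"
proof -
  have [measurable]: "\<phi> \<in> borel_measurable borel"
    using cont by (rule borel_measurable_continuous_onI)
  obtain M where bounded: "\<And>x. \<bar>\<phi> x\<bar> \<le> M"
    using continuous_bounded_support_imp_bounded[OF cont support] by blast
  define k where "k = 2 * c / \<beta>"
  have pole_and_regular_part: "integral\<^sup>L lborel (\<lambda>x. \<phi> x * Im (fbc \<beta> c (Complex x e))) =
      k * integral\<^sup>L lborel (\<lambda>x. \<phi> x * (e / (x^2 + e^2)))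
      + integral\<^sup>L lborel (\<lambda>x. \<phi> x * Im (fbc_regular \<beta> c (Complex x e)))" if "e > 0" for e
  proof -
    have "Im (of_real k / Complex x e) = - k * (e / (x^2 + e^2))" for x
      by (simp add: Im_divide power2_eq_square)
    then have pointwise: "\<phi> x * Im (fbc \<beta> c (Complex x e)) =
        k * (\<phi> x * (e / (x^2 + e^2))) + \<phi> x * Im (fbc_regular \<beta> c (Complex x e))" for x
      by (simp add: fbc_regular_def k_def algebra_simps)
    have "integrable lborel (\<lambda>x. \<phi> x * (e / (x^2 + e^2)))"
      by (rule integrable_mult_poisson_kernel) (use that bounded support in auto)
    moreover have "integrable lborel (\<lambda>x. \<phi> x * Im (fbc_regular \<beta> c (Complex x e)))"
      by (rule integrable_mult_Im_fbc_regular) (use that assms bounded support in auto)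
    ultimately show ?thesis
      unfolding pointwise by (simp only: Bochner_Integration.integral_add integrable_mult_right integral_mult_right_zero)
  qed
  have nu: "integral\<^sup>L lborel (\<lambda>x. \<phi> x * (pi * nu_density \<beta> c x)) = pi * integral\<^sup>L (nu \<beta> c) \<phi>"
    unfolding nu_def using nu_density_nonneg[OF assms(1,2)]
    by (subst integral_density) (auto simp: ac_simps)
  have "((\<lambda>e. k * integral\<^sup>L lborel (\<lambda>x. \<phi> x * (e / (x^2 + e^2)))
      + integral\<^sup>L lborel (\<lambda>x. \<phi> x * Im (fbc_regular \<beta> c (Complex x e))))
      \<longlongrightarrow> k * (pi * \<phi> 0) + pi * integral\<^sup>L (nu \<beta> c) \<phi>) (at_right 0)"
    unfolding nu[symmetric]
    by (intro tendsto_add tendsto_mult_left tendsto_integral_poisson_kernel[OF cont bounded]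
        tendsto_integral_Im_fbc_regular) (use assms bounded support in auto)
  moreover have "\<forall>\<^sub>F e in at_right 0. k * integral\<^sup>L lborel (\<lambda>x. \<phi> x * (e / (x^2 + e^2)))
      + integral\<^sup>L lborel (\<lambda>x. \<phi> x * Im (fbc_regular \<beta> c (Complex x e)))
      = integral\<^sup>L lborel (\<lambda>x. \<phi> x * Im (fbc \<beta> c (Complex x e)))"
    using eventually_at_right_less[of 0] by eventually_elim (rule pole_and_regular_part[symmetric])
  ultimately show ?thesis
    unfolding k_def by (auto simp: algebra_simps elim: tendsto_cong[THEN iffD1, rotated])
qed

theorem proposition4p3:
  fixes \<beta> c :: real and \<phi> :: "real \<Rightarrow> real"
  assumes "\<beta> > 0" and "c \<ge> 0" and "test_function \<phi>"
  shows "((\<lambda>\<epsilon>. integral\<^sup>L lborel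
             (\<lambda>x. complex_of_real (\<phi> x) *
                  (fbc \<beta> c (Complex x \<epsilon>) - fbc \<beta> c (Complex x (-\<epsilon>)))))
          \<longlongrightarrow> 2 * \<i> * pi * complex_of_real (integral\<^sup>L (nu \<beta> c) \<phi>)
              + 2 * \<i> * pi * complex_of_real (2 * c / \<beta>) * complex_of_real (\<phi> 0))
         (at_right 0)"
proof -
  obtain R where support: "\<And>x. R < \<bar>x\<bar> \<Longrightarrow> \<phi> x = 0"
    using test_function_imp_bounded_support[OF assms(3)] by blast
  have limit: "2 * \<i> * pi * complex_of_real (integral\<^sup>L (nu \<beta> c) \<phi>)
      + 2 * \<i> * pi * complex_of_real (2 * c / \<beta>) * complex_of_real (\<phi> 0)
      = 2 * \<i> * of_real (pi * integral\<^sup>L (nu \<beta> c) \<phi> + pi * (2 * c / \<beta>) * \<phi> 0)"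
    by (simp add: algebra_simps)
  have "((\<lambda>e. 2 * \<i> * of_real (integral\<^sup>L lborel (\<lambda>x. \<phi> x * Im (fbc \<beta> c (Complex x e)))))
      \<longlongrightarrow> 2 * \<i> * of_real (pi * integral\<^sup>L (nu \<beta> c) \<phi> + pi * (2 * c / \<beta>) * \<phi> 0)) (at_right 0)"
    by (intro tendsto_mult_left tendsto_of_real tendsto_integral_Im_fbc_from_above[where R = R])
      (use assms test_function_imp_continuous support in auto)
  moreover have "\<forall>\<^sub>F e in at_right 0.
      2 * \<i> * of_real (integral\<^sup>L lborel (\<lambda>x. \<phi> x * Im (fbc \<beta> c (Complex x e))))
      = integral\<^sup>L lborel (\<lambda>x. of_real (\<phi> x) * (fbc \<beta> c (Complex x e) - fbc \<beta> c (Complex x (-e))))"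
    using eventually_at_right_less[of 0]
  proof eventually_elim
    case (elim e)
    have "of_real (\<phi> x) * (fbc \<beta> c (Complex x e) - fbc \<beta> c (Complex x (-e)))
        = 2 * \<i> * of_real (\<phi> x * Im (fbc \<beta> c (Complex x e)))" for x
      using elim by (simp add: fbc_jump)
    then show ?case
      by (simp only: integral_mult_right_zero integral_complex_of_real)
  qed
  ultimately show ?thesis
    unfolding limit by (rule tendsto_cong[THEN iffD1, rotated])
qed

end
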